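(* Fix a dataset $\mathbb D_N$ and a point $x\in\mathcal X$. Let $\lambda_\dagger(x|\mathbb D_N)$ be the minimum eigenvalue of the feasibility tradeoff matrix $\mathcal F(x|\mathbb D_N)=\beta^2\Sigma_{L_gB}(x|\mathbb D_N)-\widehat{L_gB}(x|\mathbb D_N)^T\widehat{L_gB}(x|\mathbb D_N)$, and let $e_\dagger(x|\mathbb D_N)$ be an associated unit eigenvector. Suppose $\lambda_\dagger(x|\mathbb D_N)<0$. Then: - the GP-CBF-SOCP is feasible at $x$; and - there exists $\alpha_{\min}>0$ such that for every $\alpha>\alpha_{\min}$, the input $$u_{\text{safe}}(x)=\alpha\,\mathrm{sgn}\big(\widehat{L_gB}(x|\mathbb D_N)e_\dagger(x|\mathbb D_N)\big)\,e_\dagger(x|\mathbb D_N)$$ is a feasible solution of the GP-CBF-SOCP at $x$.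
   Context: Consider $\dot x=f(x)+g(x)u$ with $x\in\mathcal X\subset\mathbb R^n$ and $u\in\mathbb R^m$, where $f,g$ are locally Lipschitz and unknown. A nominal model $\tilde f,\tilde g$ is available. Let $B:\mathcal X\to\mathbb R$ be $C^1$, let $\gamma$ be extended class-$\mathcal K_\infty$, and let $u_{\text{ref}}$ be a reference controller. Lie derivatives: $L_{\tilde f}B=\nabla B\,\tilde f$ and $L_{\tilde g}B=\nabla B\,\tilde g\in\mathbb R^{1\times m}$; $L_fB$ and $L_gB$ are defined similarly. Set $\Delta_B(x,u)=(L_fB-L_{\tilde f}B)(x)+(L_gB-L_{\tilde g}B)(x)u$. A dataset $\mathbb D_N=\{((x_j,u_j),z_j)\}$ consists of $z_j=\Delta_B(x_j,u_j)+\epsilon_j$. GP model with the affine dot product kernel $k_c((x,y),(x',y'))=y^T\mathrm{diag}(k_1(x,x'),\dots,k_{m+1}(x,x'))y'$: - Let $y_j=[1,u_j^T]^T$, $\mathbf z=(z_j)$, let $\sigma_n>0$, and let $K_c$ be the Gram matrix of $k_c$ on the data. - Let $K_{**}(x)=\mathrm{diag}(k_i(x,x))$, and let $K_{*Y}(x)\in\mathbb R^{(m+1)\times N}$ have entries $k_i(x,x_j)(y_j)_i$. - Define $m_B(x|\mathbb D_N)=K_{*Y}(K_c+\sigma_n^2I)^{-1}\mathbf z$ and $\Sigma_B(x|\mathbb D_N)=K_{**}-K_{*Y}(K_c+\sigma_n^2I)^{-1}K_{*Y}^T$, which is positive definite. - The posterior mean and standard deviation are $\mu_B(x,u|\mathbb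 D_N)=m_B^T[1;u]$ and $\sigma_B(x,u|\mathbb D_N)=\sqrt{[1,u^T]\Sigma_B[1;u]}$. $\beta>0$ is a constant. Derived quantities: - $\widehat{L_fB}(x|\mathbb D_N)=L_{\tilde f}B(x)+(m_B)_1$ and $\widehat{L_gB}(x|\mathbb D_N)=L_{\tilde g}B(x)+((m_B)_2,\dots,(m_B)_{m+1})$. - $\Sigma_{L_gB}(x|\mathbb D_N)$ is the lower-right $m\times m$ block (rows and columns $2,\dots,m+1$) of $\Sigma_B(x|\mathbb D_N)$. The GP-CBF-SOCP at $x$ is: minimize $\|u-u_{\text{ref}}(x)\|_2^2$ over $u\in\mathbb R^m$ subject to $L_{\tilde f}B(x)+L_{\tilde g}B(x)u+\mu_B(x,u|\mathbb D_N)-\beta\sigma_B(x,u|\mathbb D_N)+\gamma(B(x))\ge0$. It is feasible at $x$ if some $u$ satisfies the constraint. *)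

theory Defs
  imports "HOL-Analysis.Analysis"
begin

text \<open>Index convention: the m+1 components of the affine dot product kernel are indexed
  by the type 'm option, where None is the drift component (index 1) and Some k the
  k-th control component (index k+1).\<close>

definition ext1 :: "real^'m::finite \<Rightarrow> real^('m option)" where
  "ext1 u = (\<chi> i. case i of None \<Rightarrow> 1 | Some k \<Rightarrow> u $ k)"

definition gram_Kc ::
  "('m::finite option \<Rightarrow> real^'d \<Rightarrow> real^'d \<Rightarrow> real) \<Rightarrow> ('n::finite \<Rightarrow> real^'d) \<Rightarrow> ('n \<Rightarrow> real^'m)
    \<Rightarrow> real^'n^'n" where
  "gram_Kc k xs us = (\<chi> j l. \<Sum>i\<in>UNIV. (ext1 (us j)) $ i * k i (xs j) (xs l) * (ext1 (us l)) $ i)"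

definition K_starY ::
  "('m::finite option \<Rightarrow> real^'d \<Rightarrow> real^'d \<Rightarrow> real) \<Rightarrow> ('n::finite \<Rightarrow> real^'d) \<Rightarrow> ('n \<Rightarrow> real^'m)
    \<Rightarrow> real^'d \<Rightarrow> real^'n^('m::finite option)" where
  "K_starY k xs us x = (\<chi> i j. k i x (xs j) * (ext1 (us j)) $ i)"

definition K_starstar ::
  "('m::finite option \<Rightarrow> real^'d \<Rightarrow> real^'d \<Rightarrow> real) \<Rightarrow> real^'d \<Rightarrow> real^('m::finite option)^('m::finite option)" where
  "K_starstar k x = (\<chi> i i'. if i = i' then k i x x else 0)"

definition reg_inv ::
  "('m::finite option \<Rightarrow> real^'d \<Rightarrow> real^'d \<Rightarrow> real) \<Rightarrow> ('n::finite \<Rightarrow> real^'d) \<Rightarrow> ('n \<Rightarrow> real^'m)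
    \<Rightarrow> real \<Rightarrow> real^'n^'n" where
  "reg_inv k xs us sn = matrix_inv (gram_Kc k xs us + (sn\<^sup>2) *\<^sub>R mat 1)"

definition m_B ::
  "('m::finite option \<Rightarrow> real^'d \<Rightarrow> real^'d \<Rightarrow> real) \<Rightarrow> ('n::finite \<Rightarrow> real^'d) \<Rightarrow> ('n \<Rightarrow> real^'m)
    \<Rightarrow> real^'n \<Rightarrow> real \<Rightarrow> real^'d \<Rightarrow> real^('m::finite option)" where
  "m_B k xs us zs sn x = K_starY k xs us x *v (reg_inv k xs us sn *v zs)"

definition Sigma_B ::
  "('m::finite option \<Rightarrow> real^'d \<Rightarrow> real^'d \<Rightarrow> real) \<Rightarrow> ('n::finite \<Rightarrow> real^'d) \<Rightarrow> ('n \<Rightarrow> real^'m)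
    \<Rightarrow> real \<Rightarrow> real^'d \<Rightarrow> real^('m::finite option)^('m::finite option)" where
  "Sigma_B k xs us sn x =
     K_starstar k x - K_starY k xs us x ** reg_inv k xs us sn ** transpose (K_starY k xs us x)"

definition mu_B where
  "mu_B k xs us zs sn x u = m_B k xs us zs sn x \<bullet> ext1 u"

definition sigma_B where
  "sigma_B k xs us sn x u = sqrt (ext1 u \<bullet> (Sigma_B k xs us sn x *v ext1 u))"

definition Sigma_LgB where
  "Sigma_LgB k xs us sn x = (\<chi> a b. Sigma_B k xs us sn x $ Some a $ Some b)"

definition Lie_f :: "(real^'d \<Rightarrow> real^'d) \<Rightarrow> (real^'d \<Rightarrow> real^'d) \<Rightarrow> real^'d \<Rightarrow> real" where
  "Lie_f gradB ft x = gradB x \<bullet> ft x"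

definition Lie_g :: "(real^'d \<Rightarrow> real^'d) \<Rightarrow> (real^'d \<Rightarrow> real^'m^'d) \<Rightarrow> real^'d \<Rightarrow> real^'m" where
  "Lie_g gradB gt x = (\<chi> a. gradB x \<bullet> column a (gt x))"

text \<open>Estimates hat(L_gB) (row vector stored as a vector).\<close>
definition LgB_hat where
  "LgB_hat gradB gt k xs us zs sn x = Lie_g gradB gt x + (\<chi> a. m_B k xs us zs sn x $ Some a)"

definition tradeoff_F where
  "tradeoff_F beta gradB gt k xs us zs sn x =
     (beta\<^sup>2) *\<^sub>R Sigma_LgB k xs us sn x
     - (\<chi> a b. LgB_hat gradB gt k xs us zs sn x $ a * LgB_hat gradB gt k xs us zs sn x $ b)"

definition is_min_eigenvalue :: "real^'m^'m \<Rightarrow> real \<Rightarrow> bool" where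
  "is_min_eigenvalue M lam \<longleftrightarrow>
     (\<exists>v. v \<noteq> 0 \<and> M *v v = lam *\<^sub>R v) \<and> (\<forall>mu v. v \<noteq> 0 \<and> M *v v = mu *\<^sub>R v \<longrightarrow> lam \<le> mu)"

definition is_unit_eigenvector :: "real^'m^'m \<Rightarrow> real \<Rightarrow> real^'m \<Rightarrow> bool" where
  "is_unit_eigenvector M lam e \<longleftrightarrow> norm e = 1 \<and> M *v e = lam *\<^sub>R e"

definition socp_constraint where
  "socp_constraint beta gamma B gradB ft gt k xs us zs sn x u \<longleftrightarrow>
     Lie_f gradB ft x + Lie_g gradB gt x \<bullet> u + mu_B k xs us zs sn x u
       - beta * sigma_B k xs us sn x u + gamma (B x) \<ge> 0"

definition socp_feasible where
  "socp_feasible beta gamma B gradB ft gt k xs us zs sn x \<longleftrightarrow>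
     (\<exists>u. socp_constraint beta gamma B gradB ft gt k xs us zs sn x u)"

definition ext_class_K_inf :: "(real \<Rightarrow> real) \<Rightarrow> bool" where
  "ext_class_K_inf gamma \<longleftrightarrow> continuous_on UNIV gamma \<and> strict_mono gamma \<and> gamma 0 = 0
     \<and> filterlim gamma at_top at_top \<and> filterlim gamma at_bot at_bot"

end

theory Submission imports Defs begin

text \<open>Move along the eigenvector direction \<open>e\<close>, \<open>u = c e\<close>. The left-hand side of the SOCP
  constraint is affine in \<open>c\<close> with slope \<open>L e\<close> (where \<open>L\<close> is the estimate of \<open>L_gB\<close>), while the
  uncertainty term is \<open>\<beta>\<close> times the square root of a quadratic in \<open>c\<close> with leading coefficient
  \<open>e\<^sup>T \<Sigma>_LgB e\<close>. The eigenvalue condition \<open>\<lambda> = \<beta>\<^sup>2 e\<^sup>T \<Sigma>_LgB e - (L e)\<^sup>2 < 0\<close> says precisely that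
  the slope beats the growth rate \<open>\<beta> sqrt (e\<^sup>T \<Sigma>_LgB e)\<close> of the uncertainty term, so the
  constraint holds for all large \<open>|c|\<close> of the sign of \<open>L e\<close>.\<close>

lemma eventually_quadratic_nonneg:
  fixes g C D :: real
  assumes "g > 0"
  shows "eventually (\<lambda>t. 0 \<le> g * t\<^sup>2 + C * t + D) at_top"
proof (rule eventually_at_top_linorderI)
  fix t assume "max 1 ((\<bar>C\<bar> + \<bar>D\<bar>) / g) \<le> t"
  then have t: "1 \<le> t" "\<bar>C\<bar> + \<bar>D\<bar> \<le> g * t"
    using assms by (auto simp: pos_divide_le_eq mult.commute)
  have "\<bar>C\<bar> * t + \<bar>D\<bar> \<le> (\<bar>C\<bar> + \<bar>D\<bar>) * t"
    using t(1) by (simp add: distrib_right mult_le_cancel_left1)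
  also have "\<dots> \<le> g * t\<^sup>2"
    using mult_right_mono[OF t(2), of t] t(1) by (simp add: power2_eq_square mult.assoc)
  finally have "\<bar>C\<bar> * t + \<bar>D\<bar> \<le> g * t\<^sup>2" .
  moreover have "- (\<bar>C\<bar> * t) \<le> C * t"
    using t(1) mult_right_mono[of "- \<bar>C\<bar>" C t] by simp
  ultimately show "0 \<le> g * t\<^sup>2 + C * t + D"
    using abs_ge_minus_self[of D] by linarith
qed

lemma eventually_sqrt_quadratic_le_linear:
  fixes beta d p a A b :: real
  assumes "0 \<le> beta" and "0 < d" and "beta\<^sup>2 * p < d\<^sup>2"
  shows "eventually (\<lambda>t. beta * sqrt (A + b * t + p * t\<^sup>2) \<le> a + d * t) at_top"
proof -
  have "eventually (\<lambda>t. 0 \<le> (d\<^sup>2 - beta\<^sup>2 * p) * t\<^sup>2 + (2 * a * d - beta\<^sup>2 * b) * t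
      + (a\<^sup>2 - beta\<^sup>2 * A)) at_top"
    by (rule eventually_quadratic_nonneg) (use assms(3) in simp)
  moreover have "eventually (\<lambda>t. 0 \<le> a + d * t) at_top"
    using eventually_ge_at_top[of "- a / d"] by eventually_elim
      (use assms(2) in \<open>simp add: field_simps\<close>)
  ultimately show ?thesis
  proof eventually_elim
    case (elim t)
    have "beta * sqrt (A + b * t + p * t\<^sup>2) = sqrt (beta\<^sup>2 * (A + b * t + p * t\<^sup>2))"
      using assms(1) by (simp add: real_sqrt_mult)
    also have "\<dots> \<le> sqrt ((a + d * t)\<^sup>2)"
      using elim(1) by (intro real_sqrt_le_mono) (simp add: algebra_simps power2_eq_square)
    also have "\<dots> = a + d * t"
      using elim(2) by simp
    finally show ?case .
  qed
qed

lemma sum_UNIV_option: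
  "(\<Sum>i\<in>(UNIV :: 'a::finite option set). f i) = f None + (\<Sum>a\<in>UNIV. f (Some a))"
  by (simp add: UNIV_option_conv sum.reindex)

lemma inner_vec_option:
  fixes v w :: "real^('m::finite option)"
  shows "v \<bullet> w = v $ None * w $ None + (\<chi> a. v $ Some a) \<bullet> (\<chi> a. w $ Some a)"
  by (simp add: inner_vec_def sum_UNIV_option)

definition ctrl_lift :: "real^'m::finite \<Rightarrow> real^('m option)" where
  "ctrl_lift v = (\<chi> i. case i of None \<Rightarrow> 0 | Some a \<Rightarrow> v $ a)"

lemma ext1_scaleR: "ext1 (c *\<^sub>R v) = ext1 0 + c *\<^sub>R ctrl_lift v"
  by (simp add: vec_eq_iff ext1_def ctrl_lift_def split: option.split)

lemma ctrl_lift_eq_0_iff: "ctrl_lift v = 0 \<longleftrightarrow> v = 0"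
  by (auto simp: vec_eq_iff ctrl_lift_def split: option.split)

lemma inner_ctrl_lift: "w \<bullet> ctrl_lift v = (\<chi> a. w $ Some a) \<bullet> v"
  by (simp add: inner_vec_option ctrl_lift_def)

lemma inner_ext1_0: "w \<bullet> ext1 0 = w $ None"
  by (simp add: inner_vec_option ext1_def zero_vec_def[symmetric])

lemma quadratic_form_ctrl_lift:
  "ctrl_lift v \<bullet> (S *v ctrl_lift v) = v \<bullet> ((\<chi> a b. S $ Some a $ Some b) *v v)"
proof -
  have "(\<chi> a. (S *v ctrl_lift v) $ Some a) = (\<chi> a b. S $ Some a $ Some b) *v v"
    by (simp add: vec_eq_iff matrix_vector_mult_def sum_UNIV_option ctrl_lift_def)
  then show ?thesis
    by (metis inner_commute inner_ctrl_lift)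
qed

lemma quadratic_form_ext1_scaleR:
  fixes S :: "real^('m::finite option)^('m option)"
  shows "ext1 (c *\<^sub>R v) \<bullet> (S *v ext1 (c *\<^sub>R v)) =
    ext1 0 \<bullet> (S *v ext1 0) + (ext1 0 \<bullet> (S *v ctrl_lift v) + ctrl_lift v \<bullet> (S *v ext1 0)) * c
    + (ctrl_lift v \<bullet> (S *v ctrl_lift v)) * c\<^sup>2"
  by (simp add: ext1_scaleR matrix_vector_right_distrib matrix_vector_mult_scaleR
      inner_add_left inner_add_right algebra_simps power2_eq_square)

lemma outer_product_mult_vec:
  "(\<chi> a b. L $ a * L $ b) *v v = (L \<bullet> v) *\<^sub>R (L :: real^'m::finite)"
  by (simp add: vec_eq_iff matrix_vector_mult_def inner_vec_def sum_distrib_left mult_ac)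

lemma Sigma_LgB_quadratic_form:
  "v \<bullet> (Sigma_LgB k xs us sn x *v v) = ctrl_lift v \<bullet> (Sigma_B k xs us sn x *v ctrl_lift v)"
  by (simp add: Sigma_LgB_def quadratic_form_ctrl_lift)

lemma tradeoff_F_quadratic_form:
  "v \<bullet> (tradeoff_F beta gradB gt k xs us zs sn x *v v) =
    beta\<^sup>2 * (v \<bullet> (Sigma_LgB k xs us sn x *v v)) - (LgB_hat gradB gt k xs us zs sn x \<bullet> v)\<^sup>2"
  by (simp add: tradeoff_F_def matrix_vector_mult_diff_rdistrib outer_product_mult_vec
      scaleR_matrix_vector_assoc[symmetric] inner_diff_right power2_eq_square inner_commute)

lemma Lie_g_plus_mu_B:
  "Lie_g gradB gt x \<bullet> u + mu_B k xs us zs sn x u =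
    m_B k xs us zs sn x $ None + LgB_hat gradB gt k xs us zs sn x \<bullet> u"
  by (simp add: mu_B_def LgB_hat_def inner_vec_option ext1_def inner_add_left)

lemma socp_constraint_scaleR:
  "\<exists>A b a. \<forall>c. socp_constraint beta gamma B gradB ft gt k xs us zs sn x (c *\<^sub>R v) \<longleftrightarrow>
     beta * sqrt (A + b * c + (v \<bullet> (Sigma_LgB k xs us sn x *v v)) * c\<^sup>2)
       \<le> a + (LgB_hat gradB gt k xs us zs sn x \<bullet> v) * c"
proof (intro exI allI)
  fix c
  let ?S = "Sigma_B k xs us sn x"
  show "socp_constraint beta gamma B gradB ft gt k xs us zs sn x (c *\<^sub>R v) \<longleftrightarrow>
     beta * sqrt (ext1 0 \<bullet> (?S *v ext1 0)
         + (ext1 0 \<bullet> (?S *v ctrl_lift v) + ctrl_lift v \<bullet> (?S *v ext1 0)) * c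
         + (v \<bullet> (Sigma_LgB k xs us sn x *v v)) * c\<^sup>2)
       \<le> (Lie_f gradB ft x + m_B k xs us zs sn x $ None + gamma (B x))
         + (LgB_hat gradB gt k xs us zs sn x \<bullet> v) * c"
    using Lie_g_plus_mu_B[of gradB gt x "c *\<^sub>R v" k xs us zs sn]
    by (simp add: socp_constraint_def sigma_B_def quadratic_form_ext1_scaleR
        Sigma_LgB_quadratic_form algebra_simps)
qed

lemma eventually_socp_constraint_along_ray:
  fixes v :: "real^'m::finite" and gradB gt k xs us zs sn x
  defines "L \<equiv> LgB_hat gradB gt k xs us zs sn x"
    and "p \<equiv> v \<bullet> (Sigma_LgB k xs us sn x *v v)"
  assumes "0 \<le> beta" and "0 \<le> p" and gap: "beta\<^sup>2 * p < (L \<bullet> v)\<^sup>2"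
  shows "eventually (\<lambda>alpha. socp_constraint beta gamma B gradB ft gt k xs us zs sn x
    ((alpha * sgn (L \<bullet> v)) *\<^sub>R v)) at_top"
proof -
  have "0 < \<bar>L \<bullet> v\<bar>"
    using gap mult_nonneg_nonneg[OF zero_le_power2[of beta] \<open>0 \<le> p\<close>] by auto
  obtain A b a where ray: "\<And>c. socp_constraint beta gamma B gradB ft gt k xs us zs sn x (c *\<^sub>R v)
      \<longleftrightarrow> beta * sqrt (A + b * c + p * c\<^sup>2) \<le> a + (L \<bullet> v) * c"
    using socp_constraint_scaleR unfolding L_def p_def by blast
  define s where "s = sgn (L \<bullet> v)"
  have "s * (L \<bullet> v) = \<bar>L \<bullet> v\<bar>" and "s\<^sup>2 = 1"
    using \<open>0 < \<bar>L \<bullet> v\<bar>\<close> by (auto simp: s_def sgn_if)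
  have "eventually (\<lambda>t. beta * sqrt (A + (s * b) * t + p * t\<^sup>2) \<le> a + \<bar>L \<bullet> v\<bar> * t) at_top"
    using \<open>0 \<le> beta\<close> \<open>0 < \<bar>L \<bullet> v\<bar>\<close> gap by (intro eventually_sqrt_quadratic_le_linear) auto
  then show ?thesis
    unfolding s_def[symmetric] ray
    by eventually_elim
      (use \<open>s * (L \<bullet> v) = \<bar>L \<bullet> v\<bar>\<close> \<open>s\<^sup>2 = 1\<close> in \<open>simp add: power_mult_distrib mult_ac\<close>)
qed

theorem lemma4:
  fixes X :: "(real^'d) set" and x :: "real^'d"
    and B :: "real^'d \<Rightarrow> real" and gradB :: "real^'d \<Rightarrow> real^'d"
    and ft :: "real^'d \<Rightarrow> real^'d" and gt :: "real^'d \<Rightarrow> real^'m^'d"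
    and gamma :: "real \<Rightarrow> real" and beta :: real
    and k :: "'m option \<Rightarrow> real^'d \<Rightarrow> real^'d \<Rightarrow> real"
    and xs :: "'n::finite \<Rightarrow> real^'d" and us :: "'n \<Rightarrow> real^'m" and zs :: "real^'n"
    and sn :: real and lam :: real and e :: "real^'m"
  assumes B_C1: "\<forall>y\<in>X. (B has_derivative (\<lambda>h. gradB y \<bullet> h)) (at y within X)"
    and gradB_cont: "continuous_on X gradB"
    and gamma: "ext_class_K_inf gamma"
    and beta: "beta > 0"
    and sn: "sn > 0"
    and x: "x \<in> X"
    and SigmaB_pd: "\<forall>v. v \<noteq> 0 \<longrightarrow> v \<bullet> (Sigma_B k xs us sn x *v v) > 0"
    and lam: "is_min_eigenvalue (tradeoff_F beta gradB gt k xs us zs sn x) lam"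
    and e: "is_unit_eigenvector (tradeoff_F beta gradB gt k xs us zs sn x) lam e"
    and neg: "lam < 0"
  shows "socp_feasible beta gamma B gradB ft gt k xs us zs sn x
    \<and> (\<exists>alpha_min > 0. \<forall>alpha > alpha_min.
          socp_constraint beta gamma B gradB ft gt k xs us zs sn x
            ((alpha * sgn (LgB_hat gradB gt k xs us zs sn x \<bullet> e)) *\<^sub>R e))"
proof -
  define p where "p = e \<bullet> (Sigma_LgB k xs us sn x *v e)"
  have "e \<noteq> 0" and "e \<bullet> e = 1"
    using e by (auto simp: is_unit_eigenvector_def norm_eq_1)
  then have "p > 0"
    using SigmaB_pd by (simp add: p_def Sigma_LgB_quadratic_form ctrl_lift_eq_0_iff)
  \<comment> \<open>Only the eigenpair property of \<open>(lam, e)\<close> is used, not the minimality of \<open>lam\<close>.\<close>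
  have "beta\<^sup>2 * p - (LgB_hat gradB gt k xs us zs sn x \<bullet> e)\<^sup>2 = lam"
    using e \<open>e \<bullet> e = 1\<close> tradeoff_F_quadratic_form[of e beta gradB gt k xs us zs sn x]
    by (simp add: is_unit_eigenvector_def p_def)
  with neg beta \<open>p > 0\<close> have "eventually (\<lambda>alpha.
      socp_constraint beta gamma B gradB ft gt k xs us zs sn x
        ((alpha * sgn (LgB_hat gradB gt k xs us zs sn x \<bullet> e)) *\<^sub>R e)) at_top"
    by (intro eventually_socp_constraint_along_ray) (auto simp: p_def)
  then obtain N where N: "\<And>alpha. alpha > N \<Longrightarrow>
      socp_constraint beta gamma B gradB ft gt k xs us zs sn x
        ((alpha * sgn (LgB_hat gradB gt k xs us zs sn x \<bullet> e)) *\<^sub>R e)"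
    by (auto simp: eventually_at_top_dense)
  then have "socp_feasible beta gamma B gradB ft gt k xs us zs sn x"
    unfolding socp_feasible_def using gt_ex by blast
  moreover have "max N 1 > 0"
    by simp
  ultimately show ?thesis
    using N by force
qed

end
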